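(* Let $I=(a_1,\dots,a_n)\in(0,1]^n$ be a sorted item sequence, and let $f$ be the assignment produced by $MM_2$ on $I$ (items indexed by their position in $I$). Suppose $f$ has at least one bin containing a sole class-1 item, and let $p$ be the maximum index of such sole class-1 items in $f$. Let $U$ be the set of indices of items (other than $1,\dots,p$) that share a bin with one of the items $1,2,\dots,p$ in $f$ (possibly $U=\emptyset$). Then for any assignment $g$ of $I$ without cardinality constraints, letting $W$ be the set of indices of items (other than $1,\dots,p$) that share a bin with one of the items $1,2,\dots,p$ in $g$, we have $W\subseteq U$.
   Context: An item sequence $I=(a_1,\dots,a_n)\in(0,1]^n$ is sorted if $a_1\ge\cdots\ge a_n$. An assignment without cardinality constraints is a map $g:\{1,\dots,n\}\to\mathbb{N}$ with $\sum_{i:g(i)=j}a_i\le1$ for each bin $j$. A class-1 item is an item of size in $(\frac12,1]$; an item is sole if its bin contains no other item. Algorithm $MM_k$ ($k$-cardinality constrained version of $MM$): sort the items in non-increasing order (on an already sorted input this leaves the order, hence the indices, unchanged); keep a single open bin with load $S$. Repeat while items remain: if the open bin already contains $k$ items, close it and open a new bin; else if the head (largest remaining) item fits ($S+\text{head}\le1$) pack it; else if the tail (smallest remaining) item fits pack it; else close the open bin permanently and open a new empty bin. $MM_2$ is the case $k=2$. *)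

theory Defs
  imports Complex_Main
begin

definition valid_items :: "(nat \<Rightarrow> real) \<Rightarrow> nat \<Rightarrow> bool" where
  "valid_items a n \<longleftrightarrow> (\<forall>i\<in>{1..n}. 0 < a i \<and> a i \<le> 1)"

definition sorted_items :: "(nat \<Rightarrow> real) \<Rightarrow> nat \<Rightarrow> bool" where
  "sorted_items a n \<longleftrightarrow> (\<forall>i j. 1 \<le> i \<and> i \<le> j \<and> j \<le> n \<longrightarrow> a j \<le> a i)"

definition is_assignment :: "(nat \<Rightarrow> real) \<Rightarrow> nat \<Rightarrow> (nat \<Rightarrow> nat) \<Rightarrow> bool" where
  "is_assignment a n g \<longleftrightarrow> (\<forall>j. (\<Sum>i\<in>{i\<in>{1..n}. g i = j}. a i) \<le> 1)"

definition class1 :: "(nat \<Rightarrow> real) \<Rightarrow> nat \<Rightarrow> bool" where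
  "class1 a i \<longleftrightarrow> 1/2 < a i"

definition sole :: "nat \<Rightarrow> (nat \<Rightarrow> nat) \<Rightarrow> nat \<Rightarrow> bool" where
  "sole n f i \<longleftrightarrow> (\<forall>i'\<in>{1..n}. i' \<noteq> i \<longrightarrow> f i' \<noteq> f i)"

text \<open>Remaining items are the indices
  lo..hi (head = lo = largest, tail = hi = smallest); b is the open bin, c the number of
  items in it, S its load, f the assignment built so far.  The fuel argument only serves
  to make the definition total; 2n+2 steps suffice (each item causes at most one
  closing step followed by its packing step).\<close>
fun mm_loop :: "nat \<Rightarrow> nat \<Rightarrow> (nat \<Rightarrow> real) \<Rightarrow> nat \<Rightarrow> nat \<Rightarrow> nat \<Rightarrow> nat \<Rightarrow> real
    \<Rightarrow> (nat \<Rightarrow> nat) \<Rightarrow> (nat \<Rightarrow> nat)" where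
  "mm_loop 0 k a lo hi b c S f = f"
| "mm_loop (Suc fuel) k a lo hi b c S f =
     (if hi < lo then f
      else if c = k then mm_loop fuel k a lo hi (Suc b) 0 0 f
      else if S + a lo \<le> 1 then mm_loop fuel k a (Suc lo) hi b (Suc c) (S + a lo) (f(lo := b))
      else if S + a hi \<le> 1 then mm_loop fuel k a lo (hi - 1) b (Suc c) (S + a hi) (f(hi := b))
      else mm_loop fuel k a lo hi (Suc b) 0 0 f)"

definition MM :: "nat \<Rightarrow> (nat \<Rightarrow> real) \<Rightarrow> nat \<Rightarrow> (nat \<Rightarrow> nat)" where
  "MM k a n = mm_loop (2 * n + 2) k a 1 n 0 0 0 (\<lambda>_. 0)"

definition partners :: "nat \<Rightarrow> (nat \<Rightarrow> nat) \<Rightarrow> nat \<Rightarrow> nat set" where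
  "partners n f p = {j\<in>{1..n}. j \<notin> {1..p} \<and> (\<exists>i\<in>{1..p}. f j = f i)}"

end

theory Submission
  imports Defs
begin

text \<open>A sole item p of MM_k (k \<ge> 2) must have been packed as the head into an empty bin: a
  nonempty open bin always contains the most recently packed head item, so a tail item never
  ends up alone.  At that moment every item behind the current tail already shares a bin with
  an earlier head item, and since p stays alone, neither the next head nor the tail fits next
  to p; by sortedness a_p + a_j > 1 for every remaining item j.  Hence in any assignment, an
  item j > p placed together with some i \<le> p (so a_i \<ge> a_p) is one that MM_k has already put
  together with an item before p.\<close>

definition shares_bin_before :: "(nat \<Rightarrow> nat) \<Rightarrow> nat \<Rightarrow> nat \<Rightarrow> bool" where
  "shares_bin_before f l j \<longleftrightarrow> (\<exists>i. 1 \<le> i \<and> i < l \<and> f j = f i)"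

lemma mm_loop_outside:
  "j < lo \<or> hi < j \<Longrightarrow> mm_loop fuel k a lo hi b c S f j = f j"
  by (induction fuel arbitrary: lo hi b c S f) auto

lemma mm_loop_not_sole:
  assumes "f i = f j" "i \<noteq> j" "j \<in> {1..n}" "i \<notin> {lo..hi}" "j \<notin> {lo..hi}"
  shows "\<not> sole n (mm_loop fuel k a lo hi b c S f) i"
  using assms by (auto simp: sole_def mm_loop_outside)

lemma shares_bin_before_mm_loop:
  assumes "shares_bin_before f l j" "l \<le> lo" "j < lo \<or> hi < j"
  shows "shares_bin_before (mm_loop fuel k a lo hi b c S f) l j"
  using assms by (force simp: shares_bin_before_def mm_loop_outside)

definition mm_inv :: "nat \<Rightarrow> nat \<Rightarrow> nat \<Rightarrow> nat \<Rightarrow> nat \<Rightarrow> real \<Rightarrow> (nat \<Rightarrow> nat) \<Rightarrow> bool" where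
  "mm_inv n lo hi b c S f \<longleftrightarrow> 1 \<le> lo \<and> hi \<le> n \<and> (c = 0 \<longrightarrow> S = 0)
     \<and> (c \<noteq> 0 \<longrightarrow> 2 \<le> lo \<and> f (lo - 1) = b)
     \<and> (\<forall>j. hi < j \<and> j \<le> n \<longrightarrow> shares_bin_before f lo j)"

lemma mm_inv_close: "mm_inv n lo hi b c S f \<Longrightarrow> mm_inv n lo hi (Suc b) 0 0 f"
  by (simp add: mm_inv_def)

lemma mm_inv_pack_head:
  assumes "mm_inv n lo hi b c S f" "lo \<le> hi"
  shows "mm_inv n (Suc lo) hi b (Suc c) S' (f(lo := b))"
  using assms by (fastforce simp: mm_inv_def shares_bin_before_def)

lemma mm_inv_pack_tail:
  assumes "mm_inv n lo hi b c S f" "lo \<le> hi" "c \<noteq> 0"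
  shows "mm_inv n lo (hi - 1) b (Suc c) S' (f(hi := b))"
  unfolding mm_inv_def
proof (intro conjI impI allI)
  fix j assume j: "hi - 1 < j \<and> j \<le> n"
  show "shares_bin_before (f(hi := b)) lo j"
  proof (cases "j = hi")
    case True
    then show ?thesis using assms unfolding mm_inv_def shares_bin_before_def
      by (intro exI[of _ "lo - 1"]) auto
  next
    case False
    then have "hi < j" using assms j unfolding mm_inv_def by auto
    then obtain i where "1 \<le> i" "i < lo" "f j = f i"
      using assms j unfolding mm_inv_def shares_bin_before_def by auto
    then show ?thesis using assms(2) False unfolding shares_bin_before_def
      by (intro exI[of _ i]) auto
  qed
qed (use assms in \<open>auto simp: mm_inv_def\<close>)

lemma mm_loop_sole_head:
  assumes sorted: "sorted_items a n" and "2 \<le> k" "a p \<le> 1" "p \<le> hi" "hi \<le> n" "2 \<le> fuel"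
    and paired: "\<forall>j. hi < j \<and> j \<le> n \<longrightarrow> shares_bin_before f p j"
    and sole: "sole n (mm_loop fuel k a p hi b 0 0 f) p"
  shows "\<forall>j. p < j \<and> j \<le> n \<longrightarrow>
           1 < a p + a j \<or> shares_bin_before (mm_loop fuel k a p hi b 0 0 f) p j"
proof -
  obtain fuel' where fuel: "fuel = Suc (Suc fuel')"
    using \<open>2 \<le> fuel\<close> by (metis add_2_eq_Suc le_Suc_ex)
  define f' where "f' = f(p := b)"
  have paired': "shares_bin_before f' p j" if "hi < j" "j \<le> n" for j
    using paired that \<open>p \<le> hi\<close> unfolding shares_bin_before_def f'_def by force
  have k: "0 \<noteq> k" "Suc 0 \<noteq> k" using \<open>2 \<le> k\<close> by auto
  show ?thesis
  proof (cases "p = hi")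
    case True
    then have "mm_loop fuel k a p hi b 0 0 f = f'"
      using \<open>a p \<le> 1\<close> k by (simp add: fuel f'_def)
    then show ?thesis using paired' True by auto
  next
    case False
    then have hi: "p < hi" using \<open>p \<le> hi\<close> by simp
    consider (next_head) "a p + a (Suc p) \<le> 1" | (tail) "1 < a p + a (Suc p)" "a p + a hi \<le> 1"
      | (neither) "1 < a p + a (Suc p)" "1 < a p + a hi"
      by linarith
    then show ?thesis
    proof cases
      case next_head
      then have "mm_loop fuel k a p hi b 0 0 f =
          mm_loop fuel' k a (Suc (Suc p)) hi b 2 (a p + a (Suc p)) (f'(Suc p := b))"
        using \<open>a p \<le> 1\<close> k hi by (simp add: fuel f'_def numeral_2_eq_2)
      moreover have "\<not> sole n \<dots> p"
        by (rule mm_loop_not_sole[of _ _ "Suc p"]) (use hi \<open>hi \<le> n\<close> in \<open>auto simp: f'_def\<close>)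
      ultimately show ?thesis using sole by simp
    next
      case tail
      then have "mm_loop fuel k a p hi b 0 0 f =
          mm_loop fuel' k a (Suc p) (hi - 1) b 2 (a p + a hi) (f'(hi := b))"
        using \<open>a p \<le> 1\<close> k hi by (simp add: fuel f'_def numeral_2_eq_2)
      moreover have "\<not> sole n \<dots> p"
        by (rule mm_loop_not_sole[of _ _ hi]) (use hi \<open>hi \<le> n\<close> in \<open>auto simp: f'_def\<close>)
      ultimately show ?thesis using sole by simp
    next
      case neither
      then have F: "mm_loop fuel k a p hi b 0 0 f = mm_loop fuel' k a (Suc p) hi (Suc b) 0 0 f'"
        using \<open>a p \<le> 1\<close> k hi by (simp add: fuel f'_def)
      have "1 < a p + a j" if "p < j" "j \<le> hi" for j
      proof -
        have "a hi \<le> a j" using sorted that \<open>hi \<le> n\<close> unfolding sorted_items_def by simp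
        then show ?thesis using neither by simp
      qed
      moreover have "shares_bin_before (mm_loop fuel k a p hi b 0 0 f) p j" if "hi < j" "j \<le> n" for j
        unfolding F using that by (intro shares_bin_before_mm_loop paired') auto
      ultimately show ?thesis using not_le by blast
    qed
  qed
qed

text \<open>The fuel bound 2 * (Suc hi - lo) + c decreases with every step of the loop.\<close>

lemma mm_loop_sole_item:
  assumes valid: "valid_items a n" and sorted: "sorted_items a n" and "2 \<le> k"
  shows "mm_inv n lo hi b c S f \<Longrightarrow> 2 * (Suc hi - lo) + c \<le> fuel \<Longrightarrow> lo \<le> p \<Longrightarrow> p \<le> hi
    \<Longrightarrow> sole n (mm_loop fuel k a lo hi b c S f) p
    \<Longrightarrow> \<forall>j. p < j \<and> j \<le> n \<longrightarrow>
          1 < a p + a j \<or> shares_bin_before (mm_loop fuel k a lo hi b c S f) p j"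
proof (induction fuel arbitrary: lo hi b c S f)
  case 0
  then show ?case by simp
next
  case (Suc fuel)
  note inv = Suc.prems(1)[unfolded mm_inv_def]
  have "lo \<le> hi" using Suc.prems by simp
  have a_lo: "a lo \<le> 1" using valid inv Suc.prems unfolding valid_items_def by auto
  have continue: ?case
    if "mm_inv n lo' hi' b' c' S' f'" "2 * (Suc hi' - lo') + c' \<le> fuel" "lo' \<le> p" "p \<le> hi'"
      and step: "mm_loop (Suc fuel) k a lo hi b c S f = mm_loop fuel k a lo' hi' b' c' S' f'"
    for lo' hi' b' c' S' f'
    using Suc.IH[OF that(1-4)] Suc.prems(5) unfolding step by simp
  show ?case
  proof (cases "lo = p \<and> c = 0")
    case True
    then have "S = 0" using inv by simp
    then show ?thesis
      using mm_loop_sole_head[OF sorted \<open>2 \<le> k\<close>, where fuel = "Suc fuel"] True Suc.prems inv a_lo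
      by auto
  next
    case not_first: False
    consider (close) "c = k \<or> 1 < S + a lo \<and> 1 < S + a hi" | (head) "c \<noteq> k" "S + a lo \<le> 1"
      | (tail) "c \<noteq> k" "1 < S + a lo" "S + a hi \<le> 1"
      by linarith
    then show ?thesis
    proof cases
      case close
      then have "c \<noteq> 0" using \<open>2 \<le> k\<close> inv a_lo by auto
      then show ?thesis
        by (intro continue[OF mm_inv_close[OF Suc.prems(1)]]) (use Suc.prems close \<open>lo \<le> hi\<close> in auto)
    next
      case head
      show ?thesis
      proof (cases "lo = p")
        case True
        have "\<not> sole n (mm_loop fuel k a (Suc lo) hi b (Suc c) (S + a lo) (f(lo := b))) p"
          by (rule mm_loop_not_sole[of _ _ "lo - 1"]) (use inv not_first True \<open>lo \<le> hi\<close> in auto)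
        then show ?thesis using Suc.prems(5) head \<open>lo \<le> hi\<close> by simp
      next
        case False
        then show ?thesis
          by (intro continue[OF mm_inv_pack_head[OF Suc.prems(1) \<open>lo \<le> hi\<close>]])
            (use Suc.prems head in auto)
      qed
    next
      case tail
      have "c \<noteq> 0" using tail inv a_lo by auto
      show ?thesis
      proof (cases "hi = p")
        case True
        have "\<not> sole n (mm_loop fuel k a lo (hi - 1) b (Suc c) (S + a hi) (f(hi := b))) p"
          by (rule mm_loop_not_sole[of _ _ "lo - 1"]) (use inv \<open>c \<noteq> 0\<close> True \<open>lo \<le> hi\<close> in auto)
        then show ?thesis using Suc.prems(5) tail \<open>lo \<le> hi\<close> by simp
      next
        case False
        then show ?thesis
          by (intro continue[OF mm_inv_pack_tail[OF Suc.prems(1) \<open>lo \<le> hi\<close> \<open>c \<noteq> 0\<close>]])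
            (use Suc.prems tail inv in auto)
      qed
    qed
  qed
qed

lemma MM_sole_item:
  assumes "valid_items a n" "sorted_items a n" "2 \<le> k" "p \<in> {1..n}" "sole n (MM k a n) p"
  shows "\<forall>j. p < j \<and> j \<le> n \<longrightarrow> 1 < a p + a j \<or> shares_bin_before (MM k a n) p j"
proof -
  have "mm_inv n 1 n 0 0 0 (\<lambda>_. 0)" by (auto simp: mm_inv_def)
  from mm_loop_sole_item[OF assms(1-3) this, of "2 * n + 2" p] show ?thesis
    using assms(4,5) unfolding MM_def by auto
qed

lemma assignment_pair_load:
  assumes "is_assignment a n g" "valid_items a n" "i \<in> {1..n}" "j \<in> {1..n}" "i \<noteq> j" "g i = g j"
  shows "a i + a j \<le> 1"
proof -
  have "a i + a j = (\<Sum>x\<in>{i, j}. a x)" using \<open>i \<noteq> j\<close> by simp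
  also have "\<dots> \<le> (\<Sum>x\<in>{x\<in>{1..n}. g x = g i}. a x)"
    by (rule sum_mono2) (use assms in \<open>auto simp: valid_items_def less_imp_le\<close>)
  also have "\<dots> \<le> 1" using assms(1) unfolding is_assignment_def by blast
  finally show ?thesis .
qed

theorem lemma1:
  fixes a :: "nat \<Rightarrow> real" and n :: nat and g :: "nat \<Rightarrow> nat"
  assumes "valid_items a n" and "sorted_items a n"
    and "\<exists>i\<in>{1..n}. class1 a i \<and> sole n (MM 2 a n) i"
    and "p = Max {i\<in>{1..n}. class1 a i \<and> sole n (MM 2 a n) i}"
    and "is_assignment a n g"
  shows "partners n g p \<subseteq> partners n (MM 2 a n) p"
proof
  have "p \<in> {i\<in>{1..n}. class1 a i \<and> sole n (MM 2 a n) i}"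
    unfolding assms(4) by (rule Max_in) (use assms(3) in auto)
  then have p: "p \<in> {1..n}" "sole n (MM 2 a n) p" by auto
  fix j assume "j \<in> partners n g p"
  then obtain i where j: "j \<in> {1..n}" "p < j" and i: "i \<in> {1..p}" "g j = g i"
    unfolding partners_def by auto
  have "a p \<le> a i" using assms(2) i p unfolding sorted_items_def by auto
  moreover have "a i + a j \<le> 1"
    using assignment_pair_load[OF assms(5,1)] i j p by auto
  ultimately have "\<not> 1 < a p + a j" by linarith
  then have "shares_bin_before (MM 2 a n) p j"
    using MM_sole_item[OF assms(1,2) _ p] j by auto
  then show "j \<in> partners n (MM 2 a n) p"
    using j unfolding partners_def shares_bin_before_def by auto
qed

end
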